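(* For any $x, y \in [0,1]$ and $\Delta_x, \Delta_y \in \mathbb{R}$, there exists a $1$-Lipschitz function $f : [0,1] \to [-1,1]$ such that $$f(x)\Delta_x + f(y)\Delta_y = \begin{cases} |\Delta_x| + |\Delta_y|, & \Delta_x\Delta_y \ge 0,\\ |\Delta_x + \Delta_y| + |x-y|\cdot\min\{|\Delta_x|, |\Delta_y|\}, & \Delta_x\Delta_y < 0.\end{cases}$$ *)

theory Defs
  imports "HOL-Analysis.Analysis"
begin

end

theory Submission
  imports Defs
begin

text \<open>If \<open>\<Delta>\<^sub>x\<close> and \<open>\<Delta>\<^sub>y\<close> have the same sign, the constant function with that sign works.
  Otherwise let \<open>\<bar>\<Delta>\<^sub>x\<bar> \<le> \<bar>\<Delta>\<^sub>y\<bar>\<close>: the tent of height \<open>sgn \<Delta>\<^sub>y\<close> centred at \<open>y\<close> takes the value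
  \<open>sgn \<Delta>\<^sub>y (1 - \<bar>x - y\<bar>)\<close> at \<open>x\<close>, which gives
  \<open>\<bar>\<Delta>\<^sub>y\<bar> - \<bar>\<Delta>\<^sub>x\<bar> + \<bar>x - y\<bar> \<bar>\<Delta>\<^sub>x\<bar> = \<bar>\<Delta>\<^sub>x + \<Delta>\<^sub>y\<bar> + \<bar>x - y\<bar> min \<bar>\<Delta>\<^sub>x\<bar> \<bar>\<Delta>\<^sub>y\<bar>\<close>.\<close>

definition tent :: "real \<Rightarrow> real \<Rightarrow> real \<Rightarrow> real"
  where "tent s c t = s * (1 - \<bar>t - c\<bar>)"

lemma lipschitz_on_tent:
  assumes "\<bar>s\<bar> \<le> 1"
  shows "1-lipschitz_on S (tent s c)"
proof (rule lipschitz_onI)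
  fix a b :: real
  have "\<bar>tent s c a - tent s c b\<bar> = \<bar>s\<bar> * \<bar>\<bar>b - c\<bar> - \<bar>a - c\<bar>\<bar>"
    by (simp add: tent_def right_diff_distrib[symmetric] abs_mult)
  also have "\<dots> \<le> \<bar>\<bar>b - c\<bar> - \<bar>a - c\<bar>\<bar>"
    using assms by (simp add: mult_left_le_one_le)
  also have "\<dots> \<le> \<bar>a - b\<bar>"
    by linarith
  finally show "dist (tent s c a) (tent s c b) \<le> 1 * dist a b"
    by (simp add: dist_real_def)
qed simp

lemma tent_image_unit_interval:
  assumes "\<bar>s\<bar> \<le> 1" and "c \<in> {0..1}"
  shows "tent s c ` {0..1} \<subseteq> {-1..1}"
proof
  fix v assume "v \<in> tent s c ` {0..1}"
  then obtain t where t: "t \<in> {0..1}" and v: "v = tent s c t"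
    by blast
  have "\<bar>1 - \<bar>t - c\<bar>\<bar> \<le> 1"
    using t assms(2) by auto
  then have "\<bar>v\<bar> \<le> 1"
    using assms(1) by (simp add: v tent_def abs_mult mult_le_one)
  then show "v \<in> {-1..1}"
    by auto
qed

lemma sgn_mult_add_same_sign:
  fixes dx dy :: real
  assumes "dx * dy \<ge> 0" and "\<bar>dx\<bar> \<le> \<bar>dy\<bar>"
  shows "sgn dy * dx + sgn dy * dy = \<bar>dx\<bar> + \<bar>dy\<bar>"
  using assms by (auto simp: sgn_if zero_le_mult_iff)

lemma tent_mult_add_opposite_sign:
  fixes dx dy :: real
  assumes "dx * dy < 0" and "\<bar>dx\<bar> \<le> \<bar>dy\<bar>"
  shows "tent (sgn dy) y x * dx + tent (sgn dy) y y * dy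
           = \<bar>dx + dy\<bar> + \<bar>x - y\<bar> * min \<bar>dx\<bar> \<bar>dy\<bar>"
proof -
  have "sgn dy * dx = - \<bar>dx\<bar>" and "sgn dy * dy = \<bar>dy\<bar>" and "\<bar>dx + dy\<bar> = \<bar>dy\<bar> - \<bar>dx\<bar>"
    using assms by (auto simp: sgn_if mult_less_0_iff)
  moreover have "tent (sgn dy) y x * dx + tent (sgn dy) y y * dy
                   = (sgn dy * dx) * (1 - \<bar>x - y\<bar>) + sgn dy * dy"
    by (simp add: tent_def algebra_simps)
  ultimately show ?thesis
    using assms(2) by (simp add: min_def algebra_simps)
qed

lemma exists_lipschitz_witness_abs_le:
  fixes x y dx dy :: real
  assumes "y \<in> {0..1}" and "\<bar>dx\<bar> \<le> \<bar>dy\<bar>"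
  shows "\<exists>f :: real \<Rightarrow> real.
           1-lipschitz_on {0..1} f \<and> f ` {0..1} \<subseteq> {-1..1} \<and>
           f x * dx + f y * dy =
             (if dx * dy \<ge> 0 then \<bar>dx\<bar> + \<bar>dy\<bar>
              else \<bar>dx + dy\<bar> + \<bar>x - y\<bar> * min \<bar>dx\<bar> \<bar>dy\<bar>)"
proof (cases "dx * dy \<ge> 0")
  case True
  have "1-lipschitz_on {0..1} (\<lambda>t::real. sgn dy)"
    using lipschitz_on_constant by (rule lipschitz_on_mono) auto
  moreover have "(\<lambda>t::real. sgn dy) ` {0..1} \<subseteq> {-1..1}"
    by (auto simp: sgn_if)
  ultimately show ?thesis
    using sgn_mult_add_same_sign[OF True assms(2)] True by (intro exI[of _ "\<lambda>t. sgn dy"]) auto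
next
  case False
  have "\<bar>sgn dy\<bar> \<le> 1"
    by (simp add: abs_sgn_eq)
  then show ?thesis
    using lipschitz_on_tent tent_image_unit_interval[OF _ assms(1)]
      tent_mult_add_opposite_sign[of dx dy] False assms(2)
    by (intro exI[of _ "tent (sgn dy) y"]) auto
qed

theorem lemma15:
  fixes x y dx dy :: real
  assumes "x \<in> {0..1}" and "y \<in> {0..1}"
  shows "\<exists>f :: real \<Rightarrow> real.
           1-lipschitz_on {0..1} f \<and> f ` {0..1} \<subseteq> {-1..1} \<and>
           f x * dx + f y * dy =
             (if dx * dy \<ge> 0 then \<bar>dx\<bar> + \<bar>dy\<bar>
              else \<bar>dx + dy\<bar> + \<bar>x - y\<bar> * min \<bar>dx\<bar> \<bar>dy\<bar>)"
proof (cases "\<bar>dx\<bar> \<le> \<bar>dy\<bar>")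
  case True
  then show ?thesis
    using exists_lipschitz_witness_abs_le[OF assms(2)] by blast
next
  case False
  then have "\<bar>dy\<bar> \<le> \<bar>dx\<bar>"
    by simp
  moreover have "(if dy * dx \<ge> 0 then \<bar>dy\<bar> + \<bar>dx\<bar> else \<bar>dy + dx\<bar> + \<bar>y - x\<bar> * min \<bar>dy\<bar> \<bar>dx\<bar>)
                 = (if dx * dy \<ge> 0 then \<bar>dx\<bar> + \<bar>dy\<bar> else \<bar>dx + dy\<bar> + \<bar>x - y\<bar> * min \<bar>dx\<bar> \<bar>dy\<bar>)"
    by (simp add: ac_simps abs_minus_commute)
  ultimately show ?thesis
    using exists_lipschitz_witness_abs_le[OF assms(1), of dy dx y] by (metis add.commute)
qed

end
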